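(* Let $E$ be a Banach space and let $\mathscr{S}_1,\dots,\mathscr{S}_n\subseteq\mathcal{L}(E)$ be mean ergodic operator semigroups such that $ST=TS$ whenever $T\in\mathscr{S}_i$, $S\in\mathscr{S}_j$ with $i\neq j$. Then $$\ker(\mathscr{S}_1-\mathrm{Id})\cdots(\mathscr{S}_n-\mathrm{Id})=\ker(\mathscr{S}_1-\mathrm{Id})+\cdots+\ker(\mathscr{S}_n-\mathrm{Id}).$$
   Context: $\mathcal{L}(E)$ denotes the bounded linear operators on $E$. A semigroup $\mathscr{S}\subseteq\mathcal{L}(E)$ is mean ergodic if the closure (in the strong operator topology) of its convex hull contains a zero element $P$, i.e. $PT=P=TP$ for all $T\in\mathscr{S}$. For a set $\mathscr{A}\subseteq\mathcal{L}(E)$, $\ker\mathscr{A}=\bigcap_{A\in\mathscr{A}}\ker A$; here $\ker(\mathscr{S}_j-\mathrm{Id})=\bigcap_{S\in\mathscr{S}_j}\ker(S-\mathrm{Id})$, and $\ker(\mathscr{S}_1-\mathrm{Id})\cdots(\mathscr{S}_n-\mathrm{Id})$ is the intersection of $\ker\big((S_1-\mathrm{Id})\cdots(S_n-\mathrm{Id})\big)$ over all choices $S_j\in\mathscr{S}_j$. *)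

theory Defs
  imports "HOL-Analysis.Analysis"
begin

definition op_semigroup :: "('a::real_normed_vector \<Rightarrow>\<^sub>L 'a) set \<Rightarrow> bool" where
  "op_semigroup \<SS> \<longleftrightarrow> (\<forall>S\<in>\<SS>. \<forall>T\<in>\<SS>. S o\<^sub>L T \<in> \<SS>)"

definition sot_closure :: "('a::real_normed_vector \<Rightarrow>\<^sub>L 'a) set \<Rightarrow> ('a \<Rightarrow>\<^sub>L 'a) set" where
  "sot_closure A = {P. \<forall>F. finite F \<longrightarrow> (\<forall>e>0. \<exists>T\<in>A. \<forall>x\<in>F. norm (blinfun_apply T x - blinfun_apply P x) < e)}"

definition is_zero_of :: "('a::real_normed_vector \<Rightarrow>\<^sub>L 'a) \<Rightarrow> ('a \<Rightarrow>\<^sub>L 'a) set \<Rightarrow> bool" where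
  "is_zero_of P \<SS> \<longleftrightarrow> (\<forall>T\<in>\<SS>. P o\<^sub>L T = P \<and> T o\<^sub>L P = P)"

definition mean_ergodic :: "('a::real_normed_vector \<Rightarrow>\<^sub>L 'a) set \<Rightarrow> bool" where
  "mean_ergodic \<SS> \<longleftrightarrow> (\<exists>P\<in>sot_closure (convex hull \<SS>). is_zero_of P \<SS>)"

definition fix_space :: "('a::real_normed_vector \<Rightarrow>\<^sub>L 'a) set \<Rightarrow> 'a set" where
  "fix_space \<SS> = {x. \<forall>S\<in>\<SS>. blinfun_apply (S - id_blinfun) x = 0}"

definition prod_minus_id :: "nat \<Rightarrow> (nat \<Rightarrow> ('a::real_normed_vector \<Rightarrow>\<^sub>L 'a)) \<Rightarrow> ('a \<Rightarrow>\<^sub>L 'a)" where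
  "prod_minus_id n s = foldr (\<lambda>j A. (s j - id_blinfun) o\<^sub>L A) [0..<n] id_blinfun"

definition prod_kernel :: "nat \<Rightarrow> (nat \<Rightarrow> ('a::real_normed_vector \<Rightarrow>\<^sub>L 'a) set) \<Rightarrow> 'a set" where
  "prod_kernel n \<SS> = {x. \<forall>s. (\<forall>j<n. s j \<in> \<SS> j) \<longrightarrow> blinfun_apply (prod_minus_id n s) x = 0}"

definition sum_fix_spaces :: "nat \<Rightarrow> (nat \<Rightarrow> ('a::real_normed_vector \<Rightarrow>\<^sub>L 'a) set) \<Rightarrow> 'a set" where
  "sum_fix_spaces n \<SS> = {x. \<exists>y. (\<forall>j<n. y j \<in> fix_space (\<SS> j)) \<and> x = (\<Sum>j<n. y j)}"

end

theory Submission
  imports Defs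
begin

text \<open>For \<open>x\<close> in a fixed space, the factor belonging to \<open>\<SS>\<^sub>j\<close> commutes to the right end of
  the product and kills \<open>x\<close>; this gives \<open>\<supseteq>\<close>. For \<open>\<subseteq>\<close>, let \<open>P\<^sub>j\<close> be the zero element of \<open>\<SS>\<^sub>j\<close>.
  Every identity that is affine in an operator \<open>A\<close> and holds for all \<open>A \<in> \<SS>\<^sub>j\<close> persists for
  all \<open>A\<close> in the strongly closed convex hull, in particular for \<open>P\<^sub>j\<close>. Hence the \<open>P\<^sub>j\<close> commute
  with each other and the factors of the kernel condition may be replaced one by one by \<open>P\<^sub>j\<close>,
  giving \<open>(P\<^sub>0 - Id)\<cdots>(P\<^sub>n\<^sub>-\<^sub>1 - Id) x = 0\<close>. Writing \<open>D\<^sub>k = (P\<^sub>0 - Id)\<cdots>(P\<^sub>k\<^sub>-\<^sub>1 - Id) x\<close>, we get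
  \<open>D\<^sub>k\<^sub>+\<^sub>1 = P\<^sub>k D\<^sub>k - D\<^sub>k\<close>, and telescoping yields \<open>x = \<Sum>\<^sub>k (-1)\<^sup>k P\<^sub>k D\<^sub>k\<close> with
  \<open>P\<^sub>k D\<^sub>k \<in> ker(\<SS>\<^sub>k - Id)\<close>.\<close>

definition minus_id_prod :: "nat list \<Rightarrow> (nat \<Rightarrow> ('a::real_normed_vector \<Rightarrow>\<^sub>L 'a)) \<Rightarrow> ('a \<Rightarrow>\<^sub>L 'a)" where
  "minus_id_prod xs s = foldr (\<lambda>j A. (s j - id_blinfun) o\<^sub>L A) xs id_blinfun"

lemma prod_minus_id_eq_minus_id_prod: "prod_minus_id n s = minus_id_prod [0..<n] s"
  by (simp add: prod_minus_id_def minus_id_prod_def)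

lemma minus_id_prod_Nil [simp]: "minus_id_prod [] s x = x"
  by (simp add: minus_id_prod_def)

lemma minus_id_prod_Cons [simp]:
  "minus_id_prod (j # xs) s x = s j (minus_id_prod xs s x) - minus_id_prod xs s x"
  by (simp add: minus_id_prod_def blinfun.diff_left)

lemma minus_id_prod_append: "minus_id_prod (xs @ ys) s x = minus_id_prod xs s (minus_id_prod ys s x)"
  by (induction xs arbitrary: x) simp_all

lemma minus_id_prod_cong: "(\<And>i. i \<in> set xs \<Longrightarrow> s i = s' i) \<Longrightarrow> minus_id_prod xs s = minus_id_prod xs s'"
  unfolding minus_id_prod_def by (induction xs) simp_all

lemma minus_id_prod_commute:
  fixes A :: "'a::real_normed_vector \<Rightarrow>\<^sub>L 'a" and s :: "nat \<Rightarrow> ('a \<Rightarrow>\<^sub>L 'a)"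
  assumes "\<And>i w. i \<in> set xs \<Longrightarrow> A (s i w) = s i (A w)"
  shows "A (minus_id_prod xs s x) = minus_id_prod xs s (A x)"
  using assms by (induction xs arbitrary: x) (simp_all add: blinfun.diff_right)

lemma prod_minus_id_split:
  assumes "j < n"
  shows "prod_minus_id n s x = minus_id_prod [0..<j] s (s j (minus_id_prod [Suc j..<n] s x))
                              - minus_id_prod [0..<j] s (minus_id_prod [Suc j..<n] s x)"
proof -
  have "[0..<n] = [0..<j] @ j # [Suc j..<n]"
    using assms upt_add_eq_append[of 0 j "n - j"] upt_conv_Cons[of j n] by simp
  then show ?thesis
    by (simp add: prod_minus_id_eq_minus_id_prod minus_id_prod_append blinfun.diff_right)
qed

lemma sot_closureD:
  "P \<in> sot_closure A \<Longrightarrow> finite F \<Longrightarrow> e > 0 \<Longrightarrow> \<exists>T\<in>A. \<forall>x\<in>F. norm (T x - P x) < e"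
  by (simp add: sot_closure_def)

lemma sot_closure_preserves_affine_eq:
  fixes L1 L2 :: "'a::real_normed_vector \<Rightarrow>\<^sub>L 'a"
  assumes "P \<in> sot_closure {A :: 'a \<Rightarrow>\<^sub>L 'a. L1 (A y) + L2 (A z) = c}"
  shows "L1 (P y) + L2 (P z) = c"
proof (rule ccontr)
  define d where "d = norm (L1 (P y) + L2 (P z) - c)"
  define K where "K = norm L1 + norm L2 + 1"
  define e where "e = d / K"
  assume "L1 (P y) + L2 (P z) \<noteq> c"
  moreover have K: "K > 0"
    by (simp add: K_def add_nonneg_pos)
  ultimately have e: "e > 0"
    by (simp add: e_def d_def)
  then obtain A where A: "L1 (A y) + L2 (A z) = c"
    and Ay: "norm (A y - P y) < e" and Az: "norm (A z - P z) < e"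
    using sot_closureD[OF assms, of "{y, z}"] by auto
  have "L1 (P y) + L2 (P z) - c = L1 (P y - A y) + L2 (P z - A z)"
    unfolding A[symmetric] blinfun.diff_right by simp
  then have "d \<le> norm (L1 (P y - A y)) + norm (L2 (P z - A z))"
    unfolding d_def by (metis norm_triangle_ineq)
  also have "\<dots> \<le> norm L1 * norm (P y - A y) + norm L2 * norm (P z - A z)"
    by (intro add_mono norm_blinfun)
  also have "\<dots> \<le> norm L1 * e + norm L2 * e"
    using Ay Az by (intro add_mono mult_left_mono) (auto simp: norm_minus_commute)
  also have "\<dots> < K * e"
    using e by (simp add: K_def algebra_simps)
  also have "\<dots> = d"
    using K by (simp add: e_def)
  finally show False by simp
qed

lemma sot_closure_mono: "A \<subseteq> B \<Longrightarrow> sot_closure A \<subseteq> sot_closure B"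
  unfolding sot_closure_def by blast

lemma convex_affine_operator_constraint:
  fixes L1 L2 :: "'a::real_normed_vector \<Rightarrow>\<^sub>L 'a"
  shows "convex {A :: 'a \<Rightarrow>\<^sub>L 'a. L1 (A y) + L2 (A z) = c}" (is "convex ?Z")
proof (rule convexI)
  fix A B :: "'a \<Rightarrow>\<^sub>L 'a" and u v :: real
  assume "A \<in> ?Z" "B \<in> ?Z" "u + v = 1"
  then have "L1 ((u *\<^sub>R A + v *\<^sub>R B) y) + L2 ((u *\<^sub>R A + v *\<^sub>R B) z) = u *\<^sub>R c + v *\<^sub>R c"
    by (simp add: blinfun.add_left blinfun.scaleR_left blinfun.add_right blinfun.scaleR_right
        algebra_simps flip: scaleR_add_right)
  also have "\<dots> = c"
    using \<open>u + v = 1\<close> by (simp flip: scaleR_add_left)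
  finally show "u *\<^sub>R A + v *\<^sub>R B \<in> ?Z"
    by simp
qed

lemma sot_closure_convex_hull_preserves_affine_eq:
  fixes L1 L2 :: "'a::real_normed_vector \<Rightarrow>\<^sub>L 'a" and \<SS> :: "('a \<Rightarrow>\<^sub>L 'a) set"
  assumes "\<And>A. A \<in> \<SS> \<Longrightarrow> L1 (A y) + L2 (A z) = c" and "P \<in> sot_closure (convex hull \<SS>)"
  shows "L1 (P y) + L2 (P z) = c"
proof -
  let ?Z = "{A :: 'a \<Rightarrow>\<^sub>L 'a. L1 (A y) + L2 (A z) = c}"
  have "convex hull \<SS> \<subseteq> ?Z"
    by (rule hull_minimal) (use assms(1) convex_affine_operator_constraint in auto)
  then have "P \<in> sot_closure ?Z"
    using assms(2) sot_closure_mono by blast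
  then show ?thesis
    by (rule sot_closure_preserves_affine_eq)
qed

lemma sot_closure_convex_hull_commute:
  fixes T :: "'a::real_normed_vector \<Rightarrow>\<^sub>L 'a" and \<SS> :: "('a \<Rightarrow>\<^sub>L 'a) set"
  assumes "\<And>A w. A \<in> \<SS> \<Longrightarrow> A (T w) = T (A w)" and "P \<in> sot_closure (convex hull \<SS>)"
  shows "P (T w) = T (P w)"
proof -
  have "id_blinfun (P (T w)) + (- T) (P w) = 0"
    by (rule sot_closure_convex_hull_preserves_affine_eq[OF _ assms(2)])
      (simp add: assms(1) uminus_blinfun.rep_eq)
  then show ?thesis
    by (simp add: uminus_blinfun.rep_eq)
qed

lemma zero_element_range_fixed:
  assumes "is_zero_of P \<SS>"
  shows "P w \<in> fix_space \<SS>"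
proof -
  have "S (P w) = P w" if "S \<in> \<SS>" for S
  proof -
    have "S o\<^sub>L P = P"
      using assms that by (simp add: is_zero_of_def)
    then show ?thesis
      by (metis blinfun_apply_blinfun_compose)
  qed
  then show ?thesis
    by (simp add: fix_space_def blinfun.diff_left)
qed

lemma fix_space_scaleR: "w \<in> fix_space \<SS> \<Longrightarrow> a *\<^sub>R w \<in> fix_space \<SS>"
  by (simp add: fix_space_def blinfun.scaleR_right)

lemma prod_minus_id_vanishes_on_fix_space:
  fixes s :: "nat \<Rightarrow> ('a::real_normed_vector \<Rightarrow>\<^sub>L 'a)"
  assumes "j < n" and "s j w = w"
    and "\<And>i v. j < i \<Longrightarrow> i < n \<Longrightarrow> s j (s i v) = s i (s j v)"
  shows "prod_minus_id n s w = 0"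
proof -
  have "s j (minus_id_prod [Suc j..<n] s w) = minus_id_prod [Suc j..<n] s w"
    using assms(2,3) minus_id_prod_commute[of "[Suc j..<n]" "s j" s w] by auto
  then show ?thesis
    by (simp add: prod_minus_id_split[OF assms(1)])
qed

lemma sum_fix_spaces_subset_prod_kernel:
  fixes \<SS> :: "nat \<Rightarrow> ('a::real_normed_vector \<Rightarrow>\<^sub>L 'a) set"
  assumes "\<And>i j S T w. i < n \<Longrightarrow> j < n \<Longrightarrow> i \<noteq> j \<Longrightarrow> T \<in> \<SS> i \<Longrightarrow> S \<in> \<SS> j \<Longrightarrow> S (T w) = T (S w)"
  shows "sum_fix_spaces n \<SS> \<subseteq> prod_kernel n \<SS>"
proof
  fix x assume "x \<in> sum_fix_spaces n \<SS>"
  then obtain y where y: "\<And>j. j < n \<Longrightarrow> y j \<in> fix_space (\<SS> j)" and x: "x = (\<Sum>j<n. y j)"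
    unfolding sum_fix_spaces_def by blast
  have "prod_minus_id n s x = 0" if s: "\<forall>j<n. s j \<in> \<SS> j" for s
  proof -
    have "prod_minus_id n s (y j) = 0" if "j < n" for j
      using that y[OF that] s assms[of _ j]
      by (intro prod_minus_id_vanishes_on_fix_space) (auto simp: fix_space_def blinfun.diff_left)
    then show ?thesis
      unfolding x by (simp add: blinfun.sum_right)
  qed
  then show "x \<in> prod_kernel n \<SS>"
    unfolding prod_kernel_def by blast
qed

lemma prod_minus_id_replace_factor:
  fixes \<SS> :: "('a::real_normed_vector \<Rightarrow>\<^sub>L 'a) set" and s :: "nat \<Rightarrow> ('a \<Rightarrow>\<^sub>L 'a)"
  assumes "k < n" and "P \<in> sot_closure (convex hull \<SS>)"
    and "\<And>A. A \<in> \<SS> \<Longrightarrow> prod_minus_id n (s(k := A)) x = 0"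
  shows "prod_minus_id n (s(k := P)) x = 0"
proof -
  define L where "L = minus_id_prod [0..<k] s"
  define y where "y = minus_id_prod [Suc k..<n] s x"
  have outer: "minus_id_prod [0..<k] (s(k := B)) = L" for B
    unfolding L_def by (rule minus_id_prod_cong) simp
  have inner: "minus_id_prod [Suc k..<n] (s(k := B)) = minus_id_prod [Suc k..<n] s" for B
    by (rule minus_id_prod_cong) simp
  have "L (P y) + (0 :: 'a \<Rightarrow>\<^sub>L 'a) (P y) = L y"
  proof (rule sot_closure_convex_hull_preserves_affine_eq[OF _ assms(2)])
    fix A assume "A \<in> \<SS>"
    then show "L (A y) + (0 :: 'a \<Rightarrow>\<^sub>L 'a) (A y) = L y"
      using assms(3)[of A] prod_minus_id_split[OF assms(1), of "s(k := A)" x]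
      by (simp add: outer inner y_def)
  qed
  then show ?thesis
    using prod_minus_id_split[OF assms(1), of "s(k := P)" x] by (simp add: outer inner y_def)
qed

lemma telescoping_fix_space_decomposition:
  fixes P :: "nat \<Rightarrow> ('a::real_normed_vector \<Rightarrow>\<^sub>L 'a)"
  assumes "prod_minus_id n P x = 0"
    and "\<And>i j w. i < n \<Longrightarrow> j < n \<Longrightarrow> P i (P j w) = P j (P i w)"
  shows "x = (\<Sum>k<n. ((-1::real) ^ k) *\<^sub>R P k (minus_id_prod [0..<k] P x))"
proof -
  define D where "D k = minus_id_prod [0..<k] P x" for k
  define c where "c k = ((-1::real) ^ k) *\<^sub>R D k" for k
  have D_Suc: "D (Suc k) = P k (D k) - D k" if "k < n" for k
  proof -
    have "minus_id_prod [0..<k] P (P k x) = P k (D k)"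
      unfolding D_def using assms(2) that by (intro minus_id_prod_commute[symmetric]) auto
    then show ?thesis
      by (simp add: D_def minus_id_prod_append blinfun.diff_right)
  qed
  have "(\<Sum>k<n. ((-1::real) ^ k) *\<^sub>R P k (D k)) = (\<Sum>k<n. c k - c (Suc k))"
    by (rule sum.cong) (simp_all add: c_def D_Suc algebra_simps)
  also have "\<dots> = c 0 - c n"
    by (rule sum_lessThan_telescope')
  also have "\<dots> = x"
    using assms(1) by (simp add: c_def D_def prod_minus_id_eq_minus_id_prod)
  finally show ?thesis
    by (simp add: D_def)
qed

lemma prod_kernel_subset_sum_fix_spaces:
  fixes \<SS> :: "nat \<Rightarrow> ('a::real_normed_vector \<Rightarrow>\<^sub>L 'a) set"
  assumes "\<And>j. j < n \<Longrightarrow> P j \<in> sot_closure (convex hull \<SS> j)"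
    and "\<And>j. j < n \<Longrightarrow> is_zero_of (P j) (\<SS> j)"
    and "\<And>i j S T w. i < n \<Longrightarrow> j < n \<Longrightarrow> i \<noteq> j \<Longrightarrow> T \<in> \<SS> i \<Longrightarrow> S \<in> \<SS> j \<Longrightarrow> S (T w) = T (S w)"
  shows "prod_kernel n \<SS> \<subseteq> sum_fix_spaces n \<SS>"
proof
  fix x assume x: "x \<in> prod_kernel n \<SS>"
  have P_commute: "P i (P j w) = P j (P i w)" if "i < n" "j < n" for i j w
  proof (cases "i = j")
    case False
    have "T (P j v) = P j (T v)" if "T \<in> \<SS> i" for T v
      by (rule sot_closure_convex_hull_commute[OF assms(3)[OF \<open>i < n\<close> \<open>j < n\<close> False that]
            assms(1)[OF \<open>j < n\<close>], symmetric])
    then show ?thesis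
      by (rule sot_closure_convex_hull_commute[OF _ assms(1)[OF \<open>i < n\<close>]])
  qed simp
  have "prod_minus_id n s x = 0"
    if "k \<le> n" and "\<forall>i<n. s i \<in> (if i < k then {P i} else \<SS> i)" for k s
    using that
  proof (induction k arbitrary: s)
    case 0
    then show ?case
      using x unfolding prod_kernel_def by auto
  next
    case (Suc k)
    have s_P: "s i = P i" if "i < Suc k" for i
      using Suc.prems that by (auto dest!: spec[of _ i])
    then have "prod_minus_id n (s(k := A)) x = 0" if "A \<in> \<SS> k" for A
      using Suc.prems that by (intro Suc.IH) auto
    then have "prod_minus_id n (s(k := P k)) x = 0"
      using Suc.prems(1) by (intro prod_minus_id_replace_factor[OF _ assms(1)]) auto
    moreover have "s(k := P k) = s"
      using s_P by (simp add: fun_upd_idem)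
    ultimately show ?case
      by simp
  qed
  from this[of n P] have "prod_minus_id n P x = 0"
    by simp
  define y where "y k = ((-1::real) ^ k) *\<^sub>R P k (minus_id_prod [0..<k] P x)" for k
  have "x = (\<Sum>k<n. y k)"
    unfolding y_def using \<open>prod_minus_id n P x = 0\<close>
    by (rule telescoping_fix_space_decomposition) (rule P_commute)
  moreover have "y k \<in> fix_space (\<SS> k)" if "k < n" for k
    unfolding y_def by (intro fix_space_scaleR zero_element_range_fixed assms(2) that)
  ultimately show "x \<in> sum_fix_spaces n \<SS>"
    unfolding sum_fix_spaces_def by blast
qed

theorem theorem1p3:
  fixes \<SS> :: "nat \<Rightarrow> ('a::banach \<Rightarrow>\<^sub>L 'a) set" and n :: nat
  assumes "n \<ge> 1"
    and "\<And>j. j < n \<Longrightarrow> op_semigroup (\<SS> j)"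
    and "\<And>j. j < n \<Longrightarrow> mean_ergodic (\<SS> j)"
    and "\<And>i j S T. i < n \<Longrightarrow> j < n \<Longrightarrow> i \<noteq> j \<Longrightarrow> T \<in> \<SS> i \<Longrightarrow> S \<in> \<SS> j
            \<Longrightarrow> S o\<^sub>L T = T o\<^sub>L S"
  shows "prod_kernel n \<SS> = sum_fix_spaces n \<SS>"
proof
  have commute: "S (T w) = T (S w)"
    if "i < n" "j < n" "i \<noteq> j" "T \<in> \<SS> i" "S \<in> \<SS> j" for i j S T w
    using assms(4)[OF that] by (metis blinfun_apply_blinfun_compose)
  have "\<forall>j. \<exists>P. j < n \<longrightarrow> P \<in> sot_closure (convex hull \<SS> j) \<and> is_zero_of P (\<SS> j)"
    using assms(3) unfolding mean_ergodic_def by blast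
  then obtain P where P: "\<And>j. j < n \<Longrightarrow> P j \<in> sot_closure (convex hull \<SS> j)"
    and P_zero: "\<And>j. j < n \<Longrightarrow> is_zero_of (P j) (\<SS> j)"
    by metis
  show "prod_kernel n \<SS> \<subseteq> sum_fix_spaces n \<SS>"
    using P P_zero commute by (rule prod_kernel_subset_sum_fix_spaces)
  show "sum_fix_spaces n \<SS> \<subseteq> prod_kernel n \<SS>"
    using commute by (rule sum_fix_spaces_subset_prod_kernel)
qed

end
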